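(* Assume $\delta<d$ and $\gamma\ge1$. Then $$\frac{q(z,w)}{z^\gamma w^d}\longrightarrow 1\quad\text{as } |z|\to\infty \text{ and } |w|/|z|^\alpha\to\infty,$$ and there is $R_0>0$ such that for every $R\ge R_0$ the set $W_R=\{(z,w):|z|>R,\ |w|>R|z|^\alpha\}$ satisfies $f(W_R)\subset W_R$.
   Context: Let $p(z)=z^\delta+O(z^{\delta-1})$ be a monic polynomial of degree $\delta\ge 2$, and let $q(z,w)=b(z)w^d+(\text{terms of lower degree in } w)$ be a polynomial with $d=\deg_w q\ge 2$, where $b$ is a monic polynomial of degree $\gamma$. Let $f(z,w)=(p(z),q(z,w))$. For $\delta<d$, define the rational number (possibly negative) $$\alpha=\max\Big(\Big\{\frac{-\gamma}{d-\delta}\Big\}\cup\Big\{\frac{n_j-\gamma}{d-m_j}: z^{n_j}w^{m_j}\text{ a monomial appearing in } q \text{ with nonzero coefficient},\ m_j<d\Big\}\Big).$$ *)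

theory Defs
  imports "HOL-Analysis.Analysis" "HOL-Computational_Algebra.Polynomial"
begin

text \<open>A polynomial q(z,w) in two complex variables is represented as a polynomial
  in w whose coefficients are polynomials in z: q :: complex poly poly.
  The coefficient of the monomial z^n w^m is coeff (coeff q m) n.\<close>

definition eval2 :: "complex poly poly \<Rightarrow> complex \<Rightarrow> complex \<Rightarrow> complex" where
  "eval2 q z w = poly (map_poly (\<lambda>c. poly c z) q) w"

text \<open>The exponent alpha (for deg p = delta < d = deg_w q, gamma = deg of leading coefficient b).\<close>
definition alpha_exp :: "complex poly poly \<Rightarrow> nat \<Rightarrow> real" where
  "alpha_exp q \<delta> = Max ({ - real (degree (lead_coeff q)) / (real (degree q) - real \<delta>) }
      \<union> { (real n - real (degree (lead_coeff q))) / (real (degree q) - real m)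
           | n m. m < degree q \<and> coeff (coeff q m) n \<noteq> 0 })"

definition W_region :: "real \<Rightarrow> real \<Rightarrow> (complex \<times> complex) set" where
  "W_region \<alpha> R = {(z, w). norm z > R \<and> norm w > R * norm z powr \<alpha>}"

end

theory Submission imports Defs begin

text \<open>
  Write q(z,w) = b(z) w^d + (sum of c z^n w^m with m < d) and let
  far a be the filter of pairs (z,w) with |z| \<rightarrow> \<infinity> and |w| / |z|^a \<rightarrow> \<infinity>.
  After division by z^\<gamma> w^d the leading part b(z)/z^\<gamma> tends to 1 because b is monic,
  and each lower monomial is bounded by |c| (|z|^a / |w|)^(d-m) as soon as
  n - \<gamma> \<le> a (d - m).  The definition of \<alpha> = alpha_exp guarantees exactly these
  inequalities, which gives the first claim.
  For the invariance of W_R only two consequences are used: |p(z)| lies between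
  |z|^\<delta>/2 and 2|z|^\<delta> for large |z|, and |q(z,w)| \<ge> |z|^\<gamma> |w|^d / 2 far out.
  The required inequality |q(z,w)| > R |p(z)|^\<alpha> then follows from |w| > R |z|^\<alpha>,
  d \<ge> 2 and the second defining inequality of \<alpha>, namely \<delta> \<alpha> \<le> \<gamma> + d \<alpha>.
\<close>

lemma poly_as_sum_upto:
  fixes P :: "'a::comm_semiring_1 poly"
  assumes "degree P \<le> n"
  shows "poly P x = (\<Sum>i\<le>n. coeff P i * x ^ i)"
  unfolding poly_altdef
  by (rule sum.mono_neutral_left) (use assms in \<open>auto simp: coeff_eq_0\<close>)

lemma eval2_expand:
  "eval2 q z w = poly (lead_coeff q) z * w ^ degree q
     + (\<Sum>m<degree q. \<Sum>n\<le>degree (coeff q m). coeff (coeff q m) n * z ^ n * w ^ m)"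
proof -
  have "eval2 q z w = (\<Sum>m\<le>degree q. coeff (map_poly (\<lambda>c. poly c z) q) m * w ^ m)"
    unfolding eval2_def by (rule poly_as_sum_upto) (rule map_poly_degree_leq)
  also have "\<dots> = (\<Sum>m\<le>degree q. poly (coeff q m) z * w ^ m)"
    by (simp add: coeff_map_poly)
  also have "\<dots> = poly (lead_coeff q) z * w ^ degree q + (\<Sum>m<degree q. poly (coeff q m) z * w ^ m)"
    by (simp add: lessThan_Suc_atMost[symmetric])
  also have "(\<Sum>m<degree q. poly (coeff q m) z * w ^ m)
      = (\<Sum>m<degree q. \<Sum>n\<le>degree (coeff q m). coeff (coeff q m) n * z ^ n * w ^ m)"
    by (simp add: poly_altdef sum_distrib_right)
  finally show ?thesis .
qed

lemma eventually_norm_ge: "eventually (\<lambda>z. c \<le> norm z) (filtercomap norm at_top)"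
  using filterlim_filtercomap[of norm at_top] unfolding filterlim_at_top by blast

lemma monic_poly_asymptotic:
  fixes P :: "complex poly"
  assumes "lead_coeff P = 1"
  shows "((\<lambda>z. poly P z / z ^ degree P) \<longlongrightarrow> 1) (filtercomap norm at_top)"
proof -
  define k where "k = degree P"
  have inv0: "((\<lambda>z::complex. inverse (norm z)) \<longlongrightarrow> 0) (filtercomap norm at_top)"
    by (rule tendsto_inverse_0_at_top[OF filterlim_filtercomap])
  have term_lim: "((\<lambda>z. coeff P i * z ^ i / z ^ k) \<longlongrightarrow> (if i = k then 1 else 0))
      (filtercomap norm at_top)" if "i \<le> k" for i
  proof (cases "i = k")
    case True
    have "eventually (\<lambda>z. coeff P i * z ^ i / z ^ k = 1) (filtercomap norm at_top)"
      using eventually_norm_ge[of 1] by eventually_elim (use True assms in \<open>auto simp: k_def\<close>)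
    then show ?thesis using True by (simp add: tendsto_eventually)
  next
    case False
    with that have ik: "i < k" by simp
    have "eventually (\<lambda>z. norm (coeff P i * z ^ i / z ^ k) \<le> norm (coeff P i) * inverse (norm z))
        (filtercomap norm at_top)"
      using eventually_norm_ge[of 1]
    proof eventually_elim
      case (elim z)
      define x where "x = norm z"
      have x1: "1 \<le> x" using elim by (simp add: x_def)
      have "x ^ 1 \<le> x ^ (k - i)"
        by (rule power_increasing) (use ik x1 in auto)
      then have gap: "x \<le> x ^ (k - i)" by simp
      have "norm (coeff P i * z ^ i / z ^ k) = norm (coeff P i) * x ^ i / (x ^ i * x ^ (k - i))"
        using ik by (simp add: norm_mult norm_divide norm_power x_def flip: power_add)
      also have "\<dots> = norm (coeff P i) / x ^ (k - i)" using x1 by simp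
      also have "\<dots> \<le> norm (coeff P i) / x"
        by (rule divide_left_mono) (use gap x1 in auto)
      finally show ?case by (simp add: x_def divide_inverse)
    qed
    then have "((\<lambda>z. coeff P i * z ^ i / z ^ k) \<longlongrightarrow> 0) (filtercomap norm at_top)"
      by (rule Lim_null_comparison) (use tendsto_mult_right_zero[OF inv0] in simp)
    then show ?thesis using False by simp
  qed
  have "((\<lambda>z. \<Sum>i\<le>k. coeff P i * z ^ i / z ^ k) \<longlongrightarrow> (\<Sum>i\<le>k. if i = k then 1 else 0))
      (filtercomap norm at_top)"
    by (rule tendsto_sum) (use term_lim in auto)
  then show ?thesis
    unfolding k_def poly_altdef by (simp add: sum_divide_distrib)
qed

text \<open>The filter of pairs (z,w) with |z| \<rightarrow> \<infinity> and |w| / |z|^a \<rightarrow> \<infinity>, i.e. the region in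
  which the monomial z^\<gamma> w^d dominates all monomials allowed by the exponent a.\<close>
definition far :: "real \<Rightarrow> (complex \<times> complex) filter" where
  "far a = inf (filtercomap (\<lambda>x. norm (fst x)) at_top)
               (filtercomap (\<lambda>x. norm (snd x) / norm (fst x) powr a) at_top)"

lemma far_norm_fst: "filterlim (\<lambda>x. norm (fst x)) at_top (far a)"
  unfolding far_def by (rule filterlim_mono[OF filterlim_filtercomap order_refl inf_le1])

lemma far_ratio: "filterlim (\<lambda>x. norm (snd x) / norm (fst x) powr a) at_top (far a)"
  unfolding far_def by (rule filterlim_mono[OF filterlim_filtercomap order_refl inf_le2])

lemma far_ratio_inverse: "((\<lambda>x. norm (fst x) powr a / norm (snd x)) \<longlongrightarrow> 0) (far a)"
  using tendsto_inverse_0_at_top[OF far_ratio] by (simp add: inverse_divide)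

lemma far_large_fst: "eventually (\<lambda>x. c \<le> norm (fst x)) (far a)"
  using far_norm_fst unfolding filterlim_at_top by blast

lemma far_snd_nonzero: "eventually (\<lambda>x. snd x \<noteq> 0) (far a)"
proof -
  have "eventually (\<lambda>x. 1 \<le> norm (snd x) / norm (fst x) powr a) (far a)"
    using far_ratio unfolding filterlim_at_top by blast
  then show ?thesis by eventually_elim auto
qed

text \<open>A property holding eventually along far a holds on an explicit region
  |z| \<ge> R, |w| \<ge> R |z|^a; this turns limits into the radii needed for W_R.\<close>
lemma eventually_far_region:
  assumes "eventually P (far a)"
  shows "\<exists>R. \<forall>z w. R \<le> norm z \<longrightarrow> R \<le> norm w / norm z powr a \<longrightarrow> P (z, w)"
proof -
  from assms obtain Pz Pr
    where Pz: "eventually Pz (filtercomap (\<lambda>x. norm (fst x)) at_top)"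
      and Pr: "eventually Pr (filtercomap (\<lambda>x. norm (snd x) / norm (fst x) powr a) at_top)"
      and PzPr: "\<forall>x. Pz x \<and> Pr x \<longrightarrow> P x"
    unfolding far_def eventually_inf by blast
  from Pz obtain R1 where R1: "\<forall>x. norm (fst x) \<ge> R1 \<longrightarrow> Pz x"
    unfolding eventually_filtercomap_at_top_linorder by blast
  from Pr obtain R2 where R2: "\<forall>x. norm (snd x) / norm (fst x) powr a \<ge> R2 \<longrightarrow> Pr x"
    unfolding eventually_filtercomap_at_top_linorder by blast
  show ?thesis
    by (rule exI[of _ "max R1 R2"]) (use PzPr R1 R2 in force)
qed

text \<open>A monomial c z^n w^m with m < d is negligible against z^g w^d along far a whenever
  n - g \<le> a (d - m): the quotient is bounded by |c| (|z|^a / |w|)^(d-m).\<close>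
lemma monomial_quotient_tendsto_0:
  fixes c :: complex
  assumes md: "m < d" and dom: "real n - real g \<le> a * (real d - real m)"
  shows "((\<lambda>x. c * fst x ^ n * snd x ^ m / (fst x ^ g * snd x ^ d)) \<longlongrightarrow> 0) (far a)"
proof -
  define e where "e = d - m"
  have e0: "0 < e" and de: "d = m + e" using md by (auto simp: e_def)
  have dom_e: "real n - real g \<le> a * real e" using dom md by (simp add: e_def of_nat_diff)
  have "eventually (\<lambda>x. norm (c * fst x ^ n * snd x ^ m / (fst x ^ g * snd x ^ d))
      \<le> norm c * (norm (fst x) powr a / norm (snd x)) ^ e) (far a)"
    using far_large_fst[of 1] far_snd_nonzero
  proof eventually_elim
    case (elim x)
    define X where "X = norm (fst x)"
    define Y where "Y = norm (snd x)"
    have X1: "1 \<le> X" and Y0: "0 < Y" using elim by (auto simp: X_def Y_def)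
    have "X ^ n / X ^ g = X powr (real n - real g)"
      using X1 by (simp add: powr_diff powr_realpow)
    also have "\<dots> \<le> X powr (a * real e)" by (rule powr_mono[OF dom_e X1])
    also have "\<dots> = (X powr a) ^ e"
      using X1 by (simp add: powr_power mult.commute)
    finally have X_part: "X ^ n / X ^ g \<le> (X powr a) ^ e" .
    have "norm (c * fst x ^ n * snd x ^ m / (fst x ^ g * snd x ^ d))
        = norm c * X ^ n * Y ^ m / (X ^ g * (Y ^ m * Y ^ e))"
      unfolding X_def Y_def de by (simp add: norm_mult norm_divide norm_power power_add)
    also have "\<dots> = norm c * (X ^ n / X ^ g) / Y ^ e"
      using X1 Y0 by (simp add: field_simps)
    also have "\<dots> \<le> norm c * (X powr a) ^ e / Y ^ e"
      using X_part Y0 by (intro divide_right_mono mult_left_mono) auto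
    also have "\<dots> = norm c * (X powr a / Y) ^ e" by (simp add: power_divide)
    finally show ?case by (simp add: X_def Y_def)
  qed
  moreover have "((\<lambda>x. norm c * (norm (fst x) powr a / norm (snd x)) ^ e) \<longlongrightarrow> norm c * 0 ^ e)
      (far a)"
    by (rule tendsto_mult_left[OF tendsto_power[OF far_ratio_inverse]])
  then have "((\<lambda>x. norm c * (norm (fst x) powr a / norm (snd x)) ^ e) \<longlongrightarrow> 0) (far a)"
    unfolding zero_power[OF e0] mult_zero_right .
  ultimately show ?thesis by (rule Lim_null_comparison)
qed

lemma eval2_leading_asymptotic:
  fixes q :: "complex poly poly"
  defines "g \<equiv> degree (lead_coeff q)"
  assumes monic: "lead_coeff (lead_coeff q) = 1"
    and dom: "\<And>n m. m < degree q \<Longrightarrow> coeff (coeff q m) n \<noteq> 0 \<Longrightarrow>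
        real n - real g \<le> a * (real (degree q) - real m)"
  shows "((\<lambda>x. eval2 q (fst x) (snd x) / (fst x ^ g * snd x ^ degree q)) \<longlongrightarrow> 1) (far a)"
proof -
  define d where "d = degree q"
  define T where "T m n x = coeff (coeff q m) n * fst x ^ n * snd x ^ m / (fst x ^ g * snd x ^ d)"
    for m n x
  have lead: "((\<lambda>x. poly (lead_coeff q) (fst x) / fst x ^ g) \<longlongrightarrow> 1) (far a)"
  proof -
    have "filterlim fst (filtercomap norm at_top) (far a)"
      using far_norm_fst by (simp add: filterlim_filtercomap_iff o_def)
    from filterlim_compose[OF monic_poly_asymptotic[OF monic] this] show ?thesis
      by (simp add: g_def)
  qed
  have lower: "((\<lambda>x. T m n x) \<longlongrightarrow> 0) (far a)" if "m < d" for m n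
  proof (cases "coeff (coeff q m) n = 0")
    case False
    with that show ?thesis
      unfolding T_def d_def by (intro monomial_quotient_tendsto_0 dom)
  qed (simp add: T_def)
  have "((\<lambda>x. poly (lead_coeff q) (fst x) / fst x ^ g
        + (\<Sum>m<d. \<Sum>n\<le>degree (coeff q m). T m n x))
      \<longlongrightarrow> 1 + (\<Sum>m<d. \<Sum>n\<le>degree (coeff q m). 0)) (far a)"
    by (intro tendsto_add lead tendsto_sum lower) simp
  then have sum_lim: "((\<lambda>x. poly (lead_coeff q) (fst x) / fst x ^ g
        + (\<Sum>m<d. \<Sum>n\<le>degree (coeff q m). T m n x)) \<longlongrightarrow> 1) (far a)"
    by simp
  have "eventually (\<lambda>x. poly (lead_coeff q) (fst x) / fst x ^ g
        + (\<Sum>m<d. \<Sum>n\<le>degree (coeff q m). T m n x)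
      = eval2 q (fst x) (snd x) / (fst x ^ g * snd x ^ d)) (far a)"
    using far_snd_nonzero
  proof eventually_elim
    case (elim x)
    then have "poly (lead_coeff q) (fst x) * snd x ^ d / (fst x ^ g * snd x ^ d)
        = poly (lead_coeff q) (fst x) / fst x ^ g"
      by simp
    then show ?case
      unfolding eval2_expand T_def d_def
      by (simp add: add_divide_distrib sum_divide_distrib)
  qed
  from Lim_transform_eventually[OF sum_lim this] show ?thesis by (simp add: d_def)
qed

lemma lower_bound_from_asymptotic:
  fixes Q :: "complex \<Rightarrow> complex \<Rightarrow> complex"
  assumes "((\<lambda>x. Q (fst x) (snd x) / (fst x ^ g * snd x ^ d)) \<longlongrightarrow> 1) (far a)"
  shows "\<exists>R. \<forall>z w. R \<le> norm z \<longrightarrow> R \<le> norm w / norm z powr a \<longrightarrow>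
      norm z ^ g * norm w ^ d / 2 \<le> norm (Q z w)"
proof -
  have "eventually (\<lambda>x. dist (Q (fst x) (snd x) / (fst x ^ g * snd x ^ d)) 1 < 1/2) (far a)"
    using assms by (rule tendstoD) simp
  then have "eventually (\<lambda>x. norm (fst x) ^ g * norm (snd x) ^ d / 2 \<le> norm (Q (fst x) (snd x)))
      (far a)"
    using far_large_fst[of 1] far_snd_nonzero
  proof eventually_elim
    case (elim x)
    define D where "D = fst x ^ g * snd x ^ d"
    have D0: "norm D > 0" using elim by (auto simp: D_def)
    have "norm (Q (fst x) (snd x) / D - 1) < 1/2" using elim(1) by (simp add: D_def dist_norm)
    moreover have "1 - norm (Q (fst x) (snd x) / D) \<le> norm (Q (fst x) (snd x) / D - 1)"
      using norm_triangle_ineq2[of 1 "Q (fst x) (snd x) / D"] by (simp add: norm_minus_commute)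
    ultimately have "1/2 < norm (Q (fst x) (snd x)) / norm D" by (simp add: norm_divide)
    then have "norm D / 2 < norm (Q (fst x) (snd x))" using D0 by (simp add: field_simps)
    then show ?case by (simp add: D_def norm_mult norm_power)
  qed
  from eventually_far_region[OF this] show ?thesis by simp
qed

text \<open>The two conditions on alpha_exp used in the proof: it dominates every candidate
  exponent, because the candidate set is finite (n ranges up to the degree of the
  coefficient of w^m).\<close>
lemma alpha_exp_ge_candidate:
  assumes "x \<in> { - real (degree (lead_coeff q)) / (real (degree q) - real \<delta>) }
      \<union> { (real n - real (degree (lead_coeff q))) / (real (degree q) - real m)
           | n m. m < degree q \<and> coeff (coeff q m) n \<noteq> 0 }"
  shows "x \<le> alpha_exp q \<delta>"
proof -
  have "{ (real n - real (degree (lead_coeff q))) / (real (degree q) - real m)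
           | n m. m < degree q \<and> coeff (coeff q m) n \<noteq> 0 }
      \<subseteq> (\<lambda>(m, n). (real n - real (degree (lead_coeff q))) / (real (degree q) - real m))
           ` (SIGMA m:{..<degree q}. {..degree (coeff q m)})"
    by (force intro: le_degree)
  then have "finite { (real n - real (degree (lead_coeff q))) / (real (degree q) - real m)
           | n m. m < degree q \<and> coeff (coeff q m) n \<noteq> 0 }"
    by (rule finite_subset) auto
  then show ?thesis
    unfolding alpha_exp_def using assms by (intro Max_ge) auto
qed

lemma alpha_exp_monomial_bound:
  assumes "m < degree q" and "coeff (coeff q m) n \<noteq> 0"
  shows "real n - real (degree (lead_coeff q)) \<le> alpha_exp q \<delta> * (real (degree q) - real m)"
proof -
  have "(real n - real (degree (lead_coeff q))) / (real (degree q) - real m) \<le> alpha_exp q \<delta>"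
    by (rule alpha_exp_ge_candidate) (use assms in blast)
  moreover have "real (degree q) - real m > 0" using assms(1) by simp
  ultimately show ?thesis by (simp add: pos_divide_le_eq mult.commute)
qed

lemma alpha_exp_leading_bound:
  assumes "\<delta> < degree q"
  shows "real \<delta> * alpha_exp q \<delta> \<le> real (degree (lead_coeff q)) + real (degree q) * alpha_exp q \<delta>"
proof -
  have "- real (degree (lead_coeff q)) / (real (degree q) - real \<delta>) \<le> alpha_exp q \<delta>"
    by (rule alpha_exp_ge_candidate) simp
  moreover have pos: "real (degree q) - real \<delta> > 0" using assms by simp
  ultimately have "- real (degree (lead_coeff q)) / (real (degree q) - real \<delta>) * (real (degree q) - real \<delta>)
      \<le> alpha_exp q \<delta> * (real (degree q) - real \<delta>)"
    by (intro mult_right_mono) auto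
  then have "- real (degree (lead_coeff q)) \<le> alpha_exp q \<delta> * (real (degree q) - real \<delta>)"
    using pos by simp
  then show ?thesis by (simp add: algebra_simps)
qed

lemma monic_poly_norm_bounds:
  fixes P :: "complex poly"
  assumes "lead_coeff P = 1"
  shows "\<exists>R. \<forall>z. R \<le> norm z \<longrightarrow>
      norm z ^ degree P / 2 \<le> norm (poly P z) \<and> norm (poly P z) \<le> 2 * norm z ^ degree P"
proof -
  have "eventually (\<lambda>z. dist (poly P z / z ^ degree P) 1 < 1/2) (filtercomap norm at_top)"
    using monic_poly_asymptotic[OF assms] by (rule tendstoD) simp
  then have "eventually (\<lambda>z. norm z ^ degree P / 2 \<le> norm (poly P z)
      \<and> norm (poly P z) \<le> 2 * norm z ^ degree P) (filtercomap norm at_top)"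
    using eventually_norm_ge[of 1]
  proof eventually_elim
    case (elim z)
    define s where "s = poly P z / z ^ degree P"
    have "norm z > 0" using elim(2) by linarith
    then have z0: "z \<noteq> 0" and zk: "norm z ^ degree P > 0" by auto
    have Ps: "norm (poly P z) = norm s * norm z ^ degree P"
      using z0 by (simp add: s_def norm_divide norm_power)
    have "norm s - 1 \<le> norm (s - 1)" "1 - norm s \<le> norm (s - 1)"
      using norm_triangle_ineq2[of s 1] norm_triangle_ineq2[of 1 s]
      by (simp_all add: norm_minus_commute)
    with elim(1) have s_lo: "1/2 \<le> norm s" and s_hi: "norm s \<le> 2"
      by (simp_all add: s_def dist_norm)
    have "1/2 * norm z ^ degree P \<le> norm s * norm z ^ degree P"
      by (rule mult_right_mono[OF s_lo]) (use zk in simp)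
    moreover have "norm s * norm z ^ degree P \<le> 2 * norm z ^ degree P"
      by (rule mult_right_mono[OF s_hi]) (use zk in simp)
    ultimately show ?case unfolding Ps by simp
  qed
  then show ?thesis unfolding eventually_filtercomap_at_top_linorder by blast
qed

lemma powr_comparable_le:
  fixes X y a :: real
  assumes X: "0 < X" and lo: "X / 2 \<le> y" and hi: "y \<le> 2 * X"
  shows "y powr a \<le> 2 powr \<bar>a\<bar> * X powr a"
proof -
  define s where "s = y / X"
  have s_lo: "1/2 \<le> s" and s_hi: "s \<le> 2"
    using X lo hi by (simp_all add: s_def field_simps)
  have s_pow: "s powr a \<le> 2 powr \<bar>a\<bar>"
  proof (cases "a \<ge> 0")
    case True
    then show ?thesis using powr_mono2[OF True _ s_hi] s_lo by simp
  next
    case False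
    then have "s powr a \<le> (1/2) powr a" using powr_mono2'[of a "1/2" s] s_lo by simp
    also have "(1/2) powr a = 2 powr \<bar>a\<bar>"
      using False by (simp add: powr_divide powr_minus_divide)
    finally show ?thesis .
  qed
  have "y powr a = s powr a * X powr a"
    using X s_lo by (simp add: s_def flip: powr_mult)
  then show ?thesis using s_pow by (simp add: mult_right_mono)
qed

text \<open>A power X^k with k \<ge> 2 and X > 2 exceeds 2X; this makes |p(z)| > |z| on W_R.\<close>
lemma less_half_power:
  fixes X :: real
  assumes X: "2 < X" and k: "2 \<le> k"
  shows "X < X ^ k / 2"
proof -
  have "2 * X < X * X" using mult_strict_right_mono[OF X] X by simp
  moreover have "X ^ 2 \<le> X ^ k" by (rule power_increasing) (use k X in auto)
  ultimately show ?thesis by (simp add: power2_eq_square)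
qed

lemma radius_absorbs_constant:
  fixes R K :: real
  assumes R2: "2 \<le> R" and RK: "2 * K \<le> R" and d2: "2 \<le> d"
  shows "R * K \<le> R ^ d / 2"
proof -
  have "R ^ 1 \<le> R ^ (d - 1)" by (rule power_increasing) (use d2 R2 in auto)
  then have "R * (2 * K) \<le> R * R ^ (d - 1)" using R2 RK by (intro mult_left_mono) auto
  also have "R * R ^ (d - 1) = R ^ d" using d2 by (simp flip: power_Suc)
  finally show ?thesis by simp
qed

lemma W_region_maps_into_itself:
  fixes P :: "complex \<Rightarrow> complex" and Q :: "complex \<Rightarrow> complex \<Rightarrow> complex"
  assumes P_bounds: "\<And>z. R1 \<le> norm z \<Longrightarrow>
        norm z ^ \<delta> / 2 \<le> norm (P z) \<and> norm (P z) \<le> 2 * norm z ^ \<delta>"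
    and Q_lower: "\<And>z w. R1 \<le> norm z \<Longrightarrow> R1 \<le> norm w / norm z powr a \<Longrightarrow>
        norm z ^ \<gamma> * norm w ^ d / 2 \<le> norm (Q z w)"
    and \<delta>2: "\<delta> \<ge> 2" and d2: "d \<ge> 2" and exponents: "real \<delta> * a \<le> real \<gamma> + real d * a"
    and R: "R \<ge> max 2 (max R1 (2 * 2 powr \<bar>a\<bar>))"
    and zw: "(z, w) \<in> W_region a R"
  shows "(P z, Q z w) \<in> W_region a R"
proof -
  define X where "X = norm z"
  define Y where "Y = norm w"
  define K where "K = 2 powr \<bar>a\<bar>"
  have XR: "X > R" and YR: "Y > R * X powr a" using zw by (auto simp: W_region_def X_def Y_def)
  have R2: "R \<ge> 2" "R \<ge> R1" "R \<ge> 2 * K" using R by (auto simp: K_def)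
  have X2: "X > 2" using XR R2 by simp
  have Xa0: "X powr a > 0" using X2 by simp
  have P_lo: "X ^ \<delta> / 2 \<le> norm (P z)" and P_hi: "norm (P z) \<le> 2 * X ^ \<delta>"
    using P_bounds[of z] XR R2 by (auto simp: X_def)
  have "R \<le> Y / X powr a" using YR Xa0 by (simp add: pos_le_divide_eq)
  then have Q_lo: "X ^ \<gamma> * Y ^ d / 2 \<le> norm (Q z w)"
    using Q_lower[of z w] XR R2 by (simp add: X_def Y_def)
  have P_big: "norm (P z) > R" using less_half_power[OF X2 \<delta>2] P_lo XR by simp
  have P_pow: "norm (P z) powr a \<le> K * X powr (real \<delta> * a)"
    using powr_comparable_le[of "X ^ \<delta>" "norm (P z)" a] P_lo P_hi X2
    by (simp add: K_def powr_realpow[symmetric] powr_powr)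
  have RK: "R * K \<le> R ^ d / 2" using radius_absorbs_constant[OF R2(1) R2(3) d2] .
  have X_exp: "X powr (real \<delta> * a) \<le> X ^ \<gamma> * (X powr a) ^ d"
  proof -
    have "X powr (real \<delta> * a) \<le> X powr (real \<gamma> + real d * a)"
      by (rule powr_mono[OF exponents]) (use X2 in simp)
    also have "\<dots> = X ^ \<gamma> * (X powr a) ^ d"
      using X2 by (simp add: powr_add powr_realpow powr_power)
    finally show ?thesis .
  qed
  have "R * norm (P z) powr a \<le> (R * K) * X powr (real \<delta> * a)"
    using P_pow R2 by (simp add: mult_left_mono)
  also have "\<dots> \<le> (R ^ d / 2) * (X ^ \<gamma> * (X powr a) ^ d)"
    using RK X_exp R2 by (intro mult_mono) (auto simp: K_def)
  also have "\<dots> = X ^ \<gamma> * (R * X powr a) ^ d / 2" by (simp add: power_mult_distrib)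
  also have "\<dots> < X ^ \<gamma> * Y ^ d / 2"
    using power_strict_mono[OF YR _ , of d] Xa0 R2 d2 X2 by simp
  also have "\<dots> \<le> norm (Q z w)" by (rule Q_lo)
  finally show ?thesis using P_big unfolding W_region_def by (simp add: X_def)
qed

theorem lemma5p3:
  fixes p :: "complex poly" and q :: "complex poly poly" and b :: "complex poly"
    and \<delta> d \<gamma> :: nat
  assumes p_monic: "lead_coeff p = 1" and p_deg: "degree p = \<delta>" and delta2: "\<delta> \<ge> 2"
    and q_deg: "degree q = d" and d2: "d \<ge> 2"
    and b_def: "lead_coeff q = b" and b_monic: "lead_coeff b = 1" and b_deg: "degree b = \<gamma>"
    and delta_lt: "\<delta> < d" and gamma1: "\<gamma> \<ge> 1"
  shows "((\<lambda>(z, w). eval2 q z w / (z ^ \<gamma> * w ^ d)) \<longlongrightarrow> 1)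
           (inf (filtercomap (\<lambda>(z, w). norm z) at_top)
                (filtercomap (\<lambda>(z, w). norm w / norm z powr alpha_exp q \<delta>) at_top))
       \<and> (\<exists>R0 > 0. \<forall>R \<ge> R0.
            (\<lambda>(z, w). (poly p z, eval2 q z w)) ` W_region (alpha_exp q \<delta>) R
              \<subseteq> W_region (alpha_exp q \<delta>) R)"
proof -
  define a where "a = alpha_exp q \<delta>"
  have lead_monic: "lead_coeff (lead_coeff q) = 1" unfolding b_def by (rule b_monic)
  have dominated: "real n - real (degree (lead_coeff q)) \<le> a * (real (degree q) - real m)"
    if "m < degree q" and "coeff (coeff q m) n \<noteq> 0" for n m
    unfolding a_def using that by (rule alpha_exp_monomial_bound)
  have asymp: "((\<lambda>x. eval2 q (fst x) (snd x) / (fst x ^ \<gamma> * snd x ^ d)) \<longlongrightarrow> 1) (far a)"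
    using eval2_leading_asymptotic[OF lead_monic dominated] unfolding b_def b_deg unfolding q_deg .
  obtain Rq where Rq: "\<forall>z w. Rq \<le> norm z \<longrightarrow> Rq \<le> norm w / norm z powr a \<longrightarrow>
      norm z ^ \<gamma> * norm w ^ d / 2 \<le> norm (eval2 q z w)"
    using lower_bound_from_asymptotic[where Q = "eval2 q", OF asymp] by blast
  obtain Rp where Rp: "\<forall>z. Rp \<le> norm z \<longrightarrow>
      norm z ^ \<delta> / 2 \<le> norm (poly p z) \<and> norm (poly p z) \<le> 2 * norm z ^ \<delta>"
    using monic_poly_norm_bounds[OF p_monic] p_deg by blast
  have exponents: "real \<delta> * a \<le> real \<gamma> + real d * a"
    using alpha_exp_leading_bound[of \<delta> q] unfolding b_def b_deg unfolding q_deg a_def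
    using delta_lt by blast
  define R0 where "R0 = max 2 (max (max Rp Rq) (2 * 2 powr \<bar>a\<bar>))"
  have "(\<lambda>(z, w). (poly p z, eval2 q z w)) ` W_region a R \<subseteq> W_region a R" if "R \<ge> R0" for R
    using W_region_maps_into_itself[of "max Rp Rq" \<delta> "poly p" a \<gamma> d "eval2 q" R] Rp Rq
      delta2 d2 exponents that unfolding R0_def by auto
  moreover have "R0 > 0" by (simp add: R0_def)
  ultimately show ?thesis
    using asymp unfolding far_def a_def by (auto simp: case_prod_beta')
qed

end
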